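(* Let $\mu$ be a probability measure on $\mathbb R$ with $\int x\,d\mu=0$, $\int x^2d\mu=1$ and $\int|x|^\alpha d\mu<\infty$ for some $\alpha>3$. Let $(S_n)$ be a random walk started at $0$ with step distribution $\mu$, and $S^*_n=\max_{0\le k\le n}|S_k|$. Then for every $p<\tfrac12$ there is $C_p>0$ such that for all $n\ge1$ and all $M\ge\sqrt n$, $$\mathsf P(S^*_n\ge M)\le C_p\Big(\frac{\sqrt n}{M}e^{-M^2/(18n)}+\frac1{n^p}\Big).$$ *)

theory Defs
  imports "HOL-Probability.Probability"
begin

text \<open>Random walk with step distribution mu, started at 0, realised canonically on the
  finite product space of the first n steps: a point w of this space is the vector of
  steps (w 0, ..., w (n-1)), and S_k = (sum i<k. w i) for 0 <= k <= n.
  rw_max_tail mu n M is P(S*_n >= M) where S*_n = max_{0<=k<=n} |S_k|.\<close>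

definition rw_max_tail :: "real measure \<Rightarrow> nat \<Rightarrow> real \<Rightarrow> real" where
  "rw_max_tail mu n M =
     measure (PiM {..<n} (\<lambda>_. mu))
       {w \<in> space (PiM {..<n} (\<lambda>_. mu)). (MAX k\<in>{0..n}. \<bar>\<Sum>i<k. w i\<bar>) \<ge> M}"

end

theory Submission
  imports Defs
begin

text \<open>Truncate the steps at level \<open>y = n powr \<gamma>\<close> with \<open>\<gamma> < 1/2\<close>, and write \<open>K = E \<bar>X\<bar> powr \<alpha>\<close>.
  Some step exceeds \<open>y\<close> with probability at most \<open>n K / y powr \<alpha>\<close>. Otherwise the walk agrees,
  up to a drift of at most \<open>n K y powr (1 - \<alpha>)\<close>, with a walk whose steps are independent, centred,
  of variance at most 1 and bounded by \<open>B = (1 + K) y\<close>. For such a walk Doob's maximal inequality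
  for \<open>exp (l S_k)\<close> together with \<open>E exp (l X) \<le> exp (l\<^sup>2)\<close> (valid for \<open>l B \<le> 1/2\<close>) gives
  the Bernstein-type bound \<open>exp (- x\<^sup>2 / (4 n)) + exp (- n / (4 B\<^sup>2))\<close> for the probability that the
  maximum exceeds \<open>x\<close>.

  The drift is below \<open>M/2\<close> except for boundedly many \<open>n\<close>, so one may take \<open>x = M/2\<close>, and
  \<open>exp (- M\<^sup>2 / (16 n))\<close> is dominated by \<open>sqrt n / M * exp (- M\<^sup>2 / (18 n))\<close>. The second
  exponential is \<open>exp (- c n powr (1 - 2 \<gamma>))\<close>, smaller than any power of \<open>n\<close>, and the first
  term is \<open>K n powr (1 - \<gamma> \<alpha>) \<le> K / n powr p\<close> once \<open>\<gamma> \<alpha> \<ge> 1 + p\<close>; this is compatible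
  with \<open>\<gamma> < 1/2\<close> precisely because \<open>\<alpha> > 3 > 2 (1 + p)\<close>.\<close>

lemma exp_le_one_plus_plus_square:
  fixes u :: real
  assumes "\<bar>u\<bar> \<le> 1/2"
  shows "exp u \<le> 1 + u + u\<^sup>2"
proof -
  obtain t where t: "\<bar>t\<bar> \<le> \<bar>u\<bar>" and exp_u: "exp u = 1 + u + exp t / 2 * u\<^sup>2"
    using Maclaurin_exp_le[of u 2] by (auto simp: numeral_2_eq_2)
  have "exp t \<le> exp (1/2)" using t assms by simp
  also have "\<dots> \<le> 2" using exp_bound_half[of "1/2::real"] by simp
  finally have "exp t * u\<^sup>2 \<le> 2 * u\<^sup>2" by (intro mult_right_mono) auto
  then have "exp t / 2 * u\<^sup>2 \<le> u\<^sup>2" by simp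
  then show ?thesis using exp_u by simp
qed

lemma indep_vars_PiM_components:
  fixes N :: "'a measure" and L :: "'b measure"
  assumes N: "prob_space N" and I: "I \<noteq> {}" and f: "f \<in> measurable N L"
  shows "prob_space.indep_vars (PiM I (\<lambda>_. N)) (\<lambda>_. L) (\<lambda>i w. f (w i)) I"
proof -
  interpret P: prob_space "PiM I (\<lambda>_. N)" by (rule prob_space_PiM) (use N in auto)
  have "P.indep_vars (\<lambda>_. N) (\<lambda>i w. w i) I"
  proof (subst P.indep_vars_iff_distr_eq_PiM'[OF I])
    have "distr (PiM I (\<lambda>_. N)) (PiM I (\<lambda>_. N)) (\<lambda>x. \<lambda>i\<in>I. x i)
        = distr (PiM I (\<lambda>_. N)) (PiM I (\<lambda>_. N)) (\<lambda>x. x)"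
      by (rule distr_cong) (auto simp: space_PiM PiE_def extensional_def restrict_def fun_eq_iff)
    also have "\<dots> = PiM I (\<lambda>i. distr (PiM I (\<lambda>_. N)) N (\<lambda>x. x i))"
      by (simp, rule PiM_cong) (use N in \<open>auto intro!: distr_PiM_component[symmetric]\<close>)
    finally show "distr (PiM I (\<lambda>_. N)) (PiM I (\<lambda>_. N)) (\<lambda>x. \<lambda>i\<in>I. x i)
        = PiM I (\<lambda>i. distr (PiM I (\<lambda>_. N)) N (\<lambda>x. x i))" .
  qed auto
  then show ?thesis by (rule P.indep_vars_compose2) (use f in auto)
qed

definition first_passage :: "real \<Rightarrow> (nat \<Rightarrow> real) \<Rightarrow> nat \<Rightarrow> bool" where
  "first_passage x s k \<longleftrightarrow> x \<le> s k \<and> (\<forall>j<k. s j < x)"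

lemma first_passage_unique: "first_passage x s j \<Longrightarrow> first_passage x s k \<Longrightarrow> j = k"
  unfolding first_passage_def by (metis linorder_neqE_nat not_less)

lemma ex_first_passage_iff: "(\<exists>k\<le>n. x \<le> s k) \<longleftrightarrow> (\<exists>k\<le>n. first_passage x s k)"
proof
  assume "\<exists>k\<le>n. x \<le> s k"
  then obtain k where k: "k \<le> n" "x \<le> s k" by blast
  define k0 where "k0 = (LEAST k. x \<le> s k)"
  have "x \<le> s k0" unfolding k0_def by (rule LeastI[of _ k]) (use k in auto)
  moreover have "\<forall>j<k0. s j < x" unfolding k0_def using not_less_Least by fastforce
  moreover have "k0 \<le> k" unfolding k0_def by (rule Least_le) (use k in auto)
  ultimately show "\<exists>k\<le>n. first_passage x s k"
    using k unfolding first_passage_def by (intro exI[of _ k0]) auto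
qed (auto simp: first_passage_def)

locale bounded_centred_increments = prob_space +
  fixes X :: "nat \<Rightarrow> 'a \<Rightarrow> real" and n :: nat and B :: real
  assumes indep_increments: "indep_vars (\<lambda>_. borel) X {..<n}"
    and increments_measurable[measurable]: "\<And>i. X i \<in> borel_measurable M"
    and increments_bounded: "\<And>i \<omega>. i < n \<Longrightarrow> \<omega> \<in> space M \<Longrightarrow> \<bar>X i \<omega>\<bar> \<le> B"
    and increments_centred: "\<And>i. i < n \<Longrightarrow> expectation (X i) = 0"
begin

lemma bounded_centred_increments_uminus: "bounded_centred_increments M (\<lambda>i \<omega>. - X i \<omega>) n B"
  by unfold_locales
    (use increments_bounded increments_centred in
      \<open>auto intro: indep_vars_compose2[OF indep_increments, where Y="\<lambda>_ v. - v"]\<close>)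

lemma abs_sum_increments_le:
  assumes "I \<subseteq> {..<n}" "\<omega> \<in> space M"
  shows "\<bar>\<Sum>i\<in>I. X i \<omega>\<bar> \<le> real n * \<bar>B\<bar>"
proof -
  have "\<bar>\<Sum>i\<in>I. X i \<omega>\<bar> \<le> (\<Sum>i\<in>I. \<bar>B\<bar>)"
    using assms increments_bounded by (intro order_trans[OF sum_abs] sum_mono) fastforce
  also have "\<dots> \<le> real n * \<bar>B\<bar>"
    using card_mono[OF _ assms(1)] by (simp add: mult_right_mono)
  finally show ?thesis .
qed

lemma integrable_increment: "i < n \<Longrightarrow> integrable M (X i)"
  by (rule integrable_const_bound[where B=B]) (use increments_bounded in auto)

lemma integrable_exp_sum_increments:
  assumes "I \<subseteq> {..<n}"
  shows "integrable M (\<lambda>\<omega>. exp (l * (\<Sum>i\<in>I. X i \<omega>)))"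
proof (rule integrable_const_bound[where B="exp (\<bar>l\<bar> * (real n * \<bar>B\<bar>))"])
  show "AE \<omega> in M. norm (exp (l * (\<Sum>i\<in>I. X i \<omega>))) \<le> exp (\<bar>l\<bar> * (real n * \<bar>B\<bar>))"
  proof (rule AE_I2)
    fix \<omega> assume "\<omega> \<in> space M"
    then have "\<bar>l * (\<Sum>i\<in>I. X i \<omega>)\<bar> \<le> \<bar>l\<bar> * (real n * \<bar>B\<bar>)"
      unfolding abs_mult by (intro mult_left_mono abs_sum_increments_le[OF assms]) auto
    then show "norm (exp (l * (\<Sum>i\<in>I. X i \<omega>))) \<le> exp (\<bar>l\<bar> * (real n * \<bar>B\<bar>))"
      by (simp add: abs_le_iff)
  qed
qed simp

lemma one_le_expectation_exp_sum_increments: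
  assumes "I \<subseteq> {..<n}"
  shows "1 \<le> expectation (\<lambda>\<omega>. exp (l * (\<Sum>i\<in>I. X i \<omega>)))"
proof -
  have sum_int: "integrable M (\<lambda>\<omega>. \<Sum>i\<in>I. X i \<omega>)"
    using assms integrable_increment by (intro Bochner_Integration.integrable_sum) auto
  have "expectation (\<lambda>\<omega>. \<Sum>i\<in>I. X i \<omega>) = (\<Sum>i\<in>I. expectation (X i))"
    using assms integrable_increment by (intro Bochner_Integration.integral_sum) auto
  also have "\<dots> = 0" using assms increments_centred by (intro sum.neutral) auto
  finally have "expectation (\<lambda>\<omega>. 1 + l * (\<Sum>i\<in>I. X i \<omega>)) = 1"
    using sum_int by (simp add: prob_space)
  then have "1 = expectation (\<lambda>\<omega>. 1 + l * (\<Sum>i\<in>I. X i \<omega>))" by simp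
  also have "\<dots> \<le> expectation (\<lambda>\<omega>. exp (l * (\<Sum>i\<in>I. X i \<omega>)))"
    using sum_int integrable_exp_sum_increments[OF assms] by (intro integral_mono) auto
  finally show ?thesis .
qed

lemma indep_var_first_passage_increments_after:
  assumes "k \<le> n"
  shows "indep_var
    borel (\<lambda>\<omega>. if first_passage x (\<lambda>j. \<Sum>i<j. X i \<omega>) k then exp (l * (\<Sum>i<k. X i \<omega>)) else 0)
    borel (\<lambda>\<omega>. exp (l * (\<Sum>i\<in>{k..<n}. X i \<omega>)))"
proof -
  define F' where "F' v = (if first_passage x (\<lambda>j. \<Sum>i<j. v i) k then exp (l * (\<Sum>i<k. v i)) else 0)"
    for v :: "nat \<Rightarrow> real"
  define G' where "G' v = exp (l * (\<Sum>i\<in>{k..<n}. v i))" for v :: "nat \<Rightarrow> real"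
  have "F' \<in> borel_measurable (PiM {..<k} (\<lambda>_. borel))"
    unfolding F'_def first_passage_def by measurable
  moreover have "G' \<in> borel_measurable (PiM {k..<n} (\<lambda>_. borel))" unfolding G'_def by measurable
  ultimately have "indep_var borel (F' \<circ> (\<lambda>\<omega>. restrict (\<lambda>i. X i \<omega>) {..<k}))
      borel (G' \<circ> (\<lambda>\<omega>. restrict (\<lambda>i. X i \<omega>) {k..<n}))"
    by (intro indep_var_compose[OF indep_var_restrict[OF indep_increments]]) (use assms in auto)
  also have "F' \<circ> (\<lambda>\<omega>. restrict (\<lambda>i. X i \<omega>) {..<k})
      = (\<lambda>\<omega>. if first_passage x (\<lambda>j. \<Sum>i<j. X i \<omega>) k then exp (l * (\<Sum>i<k. X i \<omega>)) else 0)"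
    by (auto simp: fun_eq_iff F'_def first_passage_def)
  also have "G' \<circ> (\<lambda>\<omega>. restrict (\<lambda>i. X i \<omega>) {k..<n}) = (\<lambda>\<omega>. exp (l * (\<Sum>i\<in>{k..<n}. X i \<omega>)))"
    by (auto simp: fun_eq_iff G'_def)
  finally show ?thesis .
qed

text \<open>On the event that the partial sums first reach \<open>x\<close> at time \<open>k\<close>, the increments after \<open>k\<close>
  are independent of that event and \<open>exp (l (S_n - S_k))\<close> has mean at least 1: the submartingale
  step in Doob's maximal inequality.\<close>

lemma exp_mult_prob_first_passage_le:
  assumes k: "k \<le> n" and l: "l \<ge> 0"
  shows "exp (l * x) * prob {\<omega>\<in>space M. first_passage x (\<lambda>j. \<Sum>i<j. X i \<omega>) k}
    \<le> expectation (\<lambda>\<omega>. if first_passage x (\<lambda>j. \<Sum>i<j. X i \<omega>) k then exp (l * (\<Sum>i<n. X i \<omega>)) else 0)"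
proof -
  define E where "E \<omega> \<longleftrightarrow> first_passage x (\<lambda>j. \<Sum>i<j. X i \<omega>) k" for \<omega>
  define F where "F \<omega> = (if E \<omega> then exp (l * (\<Sum>i<k. X i \<omega>)) else 0)" for \<omega>
  define G where "G \<omega> = exp (l * (\<Sum>i\<in>{k..<n}. X i \<omega>))" for \<omega>
  have [measurable]: "Measurable.pred M E" unfolding E_def first_passage_def by measurable
  have [measurable]: "F \<in> borel_measurable M" unfolding F_def by measurable
  have F_int: "integrable M F"
    by (rule Bochner_Integration.integrable_bound[OF integrable_exp_sum_increments[of "{..<k}" l]])
      (use k in \<open>auto simp: F_def\<close>)
  have G_int: "integrable M G" unfolding G_def by (rule integrable_exp_sum_increments) auto
  have indep_FG: "indep_var borel F borel G"
    unfolding F_def[abs_def] G_def[abs_def] E_def by (rule indep_var_first_passage_increments_after[OF k])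
  have "exp (l * x) * prob {\<omega>\<in>space M. E \<omega>}
      = expectation (\<lambda>\<omega>. exp (l * x) * indicator {\<omega>\<in>space M. E \<omega>} \<omega>)"
    by simp
  also have "\<dots> = expectation (\<lambda>\<omega>. if E \<omega> then exp (l * x) else 0)"
    by (rule Bochner_Integration.integral_cong) (auto simp: indicator_def)
  also have "\<dots> \<le> expectation F"
  proof (rule integral_mono[OF _ F_int])
    show "integrable M (\<lambda>\<omega>. if E \<omega> then exp (l * x) else 0)"
      by (rule integrable_const_bound[where B="exp (l * x)"]) auto
    show "(if E \<omega> then exp (l * x) else 0) \<le> F \<omega>" for \<omega>
      using l by (auto simp: F_def E_def first_passage_def mult_left_mono)
  qed
  also have "\<dots> \<le> expectation F * expectation G"
  proof -
    have "0 \<le> expectation F" by (intro integral_nonneg_AE) (auto simp: F_def)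
    moreover have "1 \<le> expectation G" unfolding G_def by (rule one_le_expectation_exp_sum_increments) auto
    ultimately show ?thesis using mult_left_mono[of 1 "expectation G" "expectation F"] by simp
  qed
  also have "\<dots> = expectation (\<lambda>\<omega>. F \<omega> * G \<omega>)"
    by (rule indep_var_lebesgue_integral[symmetric]) (use indep_FG F_int G_int in auto)
  also have "(\<lambda>\<omega>. F \<omega> * G \<omega>) = (\<lambda>\<omega>. if E \<omega> then exp (l * (\<Sum>i<n. X i \<omega>)) else 0)"
  proof
    fix \<omega>
    have "(\<Sum>i<n. X i \<omega>) = (\<Sum>i<k. X i \<omega>) + (\<Sum>i\<in>{k..<n}. X i \<omega>)"
      using k by (metis sum.atLeastLessThan_concat lessThan_atLeast0 zero_le)
    then show "F \<omega> * G \<omega> = (if E \<omega> then exp (l * (\<Sum>i<n. X i \<omega>)) else 0)"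
      by (simp add: F_def G_def distrib_left exp_add)
  qed
  finally show ?thesis by (simp add: E_def)
qed

theorem exp_mult_prob_max_partial_sum_ge_le:
  assumes l: "l \<ge> 0"
  shows "exp (l * x) * prob {\<omega>\<in>space M. \<exists>k\<le>n. x \<le> (\<Sum>i<k. X i \<omega>)}
    \<le> expectation (\<lambda>\<omega>. exp (l * (\<Sum>i<n. X i \<omega>)))"
proof -
  define E where "E k = {\<omega>\<in>space M. first_passage x (\<lambda>j. \<Sum>i<j. X i \<omega>) k}" for k
  define H where "H k = (\<lambda>\<omega>. if first_passage x (\<lambda>j. \<Sum>i<j. X i \<omega>) k then exp (l * (\<Sum>i<n. X i \<omega>)) else 0)"
    for k
  have E_sets[measurable]: "E k \<in> sets M" for k unfolding E_def first_passage_def by measurable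
  have [measurable]: "H k \<in> borel_measurable M" for k unfolding H_def first_passage_def by measurable
  have H_int: "integrable M (H k)" for k
    by (rule Bochner_Integration.integrable_bound[OF integrable_exp_sum_increments[of "{..<n}" l]])
      (auto simp: H_def first_passage_def)
  have H_sum_le: "(\<Sum>k\<le>n. H k \<omega>) \<le> exp (l * (\<Sum>i<n. X i \<omega>))" for \<omega>
  proof (cases "\<exists>k\<le>n. first_passage x (\<lambda>j. \<Sum>i<j. X i \<omega>) k")
    case True
    then obtain k0 where k0: "k0 \<le> n" "first_passage x (\<lambda>j. \<Sum>i<j. X i \<omega>) k0" by blast
    have "H k \<omega> = 0" if "k \<noteq> k0" for k
      using that first_passage_unique[OF k0(2), of k] by (auto simp: H_def)
    then have "(\<Sum>k\<le>n. H k \<omega>) = (\<Sum>k\<in>{k0}. H k \<omega>)"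
      using k0(1) by (intro sum.mono_neutral_right) auto
    then show ?thesis using k0 by (simp add: H_def)
  next
    case False
    then have "H k \<omega> = 0" if "k \<le> n" for k
      using that by (auto simp: H_def)
    then show ?thesis by simp
  qed
  have "{\<omega>\<in>space M. \<exists>k\<le>n. x \<le> (\<Sum>i<k. X i \<omega>)} = (\<Union>k\<in>{..n}. E k)"
    by (auto simp: E_def ex_first_passage_iff)
  also have "prob (\<Union>k\<in>{..n}. E k) = (\<Sum>k\<le>n. prob (E k))"
  proof (rule measure_finite_Union)
    show "disjoint_family_on E {..n}"
      by (auto simp: disjoint_family_on_def E_def dest: first_passage_unique)
  qed (use E_sets in auto)
  finally have "exp (l * x) * prob {\<omega>\<in>space M. \<exists>k\<le>n. x \<le> (\<Sum>i<k. X i \<omega>)}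
      = (\<Sum>k\<le>n. exp (l * x) * prob (E k))"
    by (simp add: sum_distrib_left)
  also have "\<dots> \<le> (\<Sum>k\<le>n. expectation (H k))"
    by (intro sum_mono) (use exp_mult_prob_first_passage_le l in \<open>auto simp: E_def H_def\<close>)
  also have "\<dots> = expectation (\<lambda>\<omega>. \<Sum>k\<le>n. H k \<omega>)"
    by (rule Bochner_Integration.integral_sum[symmetric]) (rule H_int)
  also have "\<dots> \<le> expectation (\<lambda>\<omega>. exp (l * (\<Sum>i<n. X i \<omega>)))"
    using H_int integrable_exp_sum_increments[of "{..<n}" l] H_sum_le by (intro integral_mono) auto
  finally show ?thesis .
qed

lemma expectation_exp_increment_le:
  assumes i: "i < n" and var: "expectation (\<lambda>\<omega>. (X i \<omega>)\<^sup>2) \<le> 1"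
    and l: "l \<ge> 0" "l * B \<le> 1/2"
  shows "expectation (\<lambda>\<omega>. exp (l * X i \<omega>)) \<le> exp (l\<^sup>2)"
proof -
  have exp_int: "integrable M (\<lambda>\<omega>. exp (l * X i \<omega>))"
    using integrable_exp_sum_increments[of "{i}" l] i by simp
  have sq_int: "integrable M (\<lambda>\<omega>. (X i \<omega>)\<^sup>2)"
  proof (rule integrable_const_bound[where B="B\<^sup>2"])
    show "AE \<omega> in M. norm ((X i \<omega>)\<^sup>2) \<le> B\<^sup>2"
    proof (rule AE_I2)
      fix \<omega> assume "\<omega> \<in> space M"
      then have "\<bar>X i \<omega>\<bar> \<le> \<bar>B\<bar>" using increments_bounded[OF i] by fastforce
      then show "norm ((X i \<omega>)\<^sup>2) \<le> B\<^sup>2" by (simp add: abs_le_square_iff)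
    qed
  qed simp
  have "exp (l * X i \<omega>) \<le> 1 + l * X i \<omega> + l\<^sup>2 * (X i \<omega>)\<^sup>2" if "\<omega> \<in> space M" for \<omega>
  proof -
    have "\<bar>l * X i \<omega>\<bar> \<le> 1/2"
      using mult_left_mono[OF increments_bounded[OF i that] l(1)] l by (simp add: abs_mult)
    from exp_le_one_plus_plus_square[OF this] show ?thesis by (simp add: power_mult_distrib)
  qed
  then have "expectation (\<lambda>\<omega>. exp (l * X i \<omega>))
      \<le> expectation (\<lambda>\<omega>. 1 + l * X i \<omega> + l\<^sup>2 * (X i \<omega>)\<^sup>2)"
    using exp_int integrable_increment[OF i] sq_int by (intro integral_mono) auto
  also have "\<dots> = 1 + l\<^sup>2 * expectation (\<lambda>\<omega>. (X i \<omega>)\<^sup>2)"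
    using integrable_increment[OF i] sq_int increments_centred[OF i] by (simp add: prob_space)
  also have "\<dots> \<le> 1 + l\<^sup>2" using var by (simp add: mult_left_le)
  also have "\<dots> \<le> exp (l\<^sup>2)" by (rule exp_ge_add_one_self)
  finally show ?thesis .
qed

lemma prob_max_partial_sum_ge_le_exp:
  assumes var: "\<And>i. i < n \<Longrightarrow> expectation (\<lambda>\<omega>. (X i \<omega>)\<^sup>2) \<le> 1"
    and l: "l \<ge> 0" "l * B \<le> 1/2"
  shows "prob {\<omega>\<in>space M. \<exists>k\<le>n. x \<le> (\<Sum>i<k. X i \<omega>)} \<le> exp (- l * x + real n * l\<^sup>2)"
proof -
  have "expectation (\<lambda>\<omega>. exp (l * (\<Sum>i<n. X i \<omega>))) = expectation (\<lambda>\<omega>. \<Prod>i<n. exp (l * X i \<omega>))"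
    by (simp add: sum_distrib_left exp_sum)
  also have "\<dots> = (\<Prod>i<n. expectation (\<lambda>\<omega>. exp (l * X i \<omega>)))"
    using integrable_exp_sum_increments[of "{_}" l]
    by (intro indep_vars_lebesgue_integral indep_vars_compose2[OF indep_increments]) auto
  also have "\<dots> \<le> (\<Prod>i<n. exp (l\<^sup>2))"
    using expectation_exp_increment_le var l by (intro prod_mono conjI integral_nonneg_AE) auto
  also have "\<dots> = exp (real n * l\<^sup>2)" by (simp add: exp_of_nat_mult)
  finally have "exp (l * x) * prob {\<omega>\<in>space M. \<exists>k\<le>n. x \<le> (\<Sum>i<k. X i \<omega>)} \<le> exp (real n * l\<^sup>2)"
    using exp_mult_prob_max_partial_sum_ge_le[OF l(1), of x] by linarith
  then show ?thesis by (simp add: exp_diff mult.commute pos_le_divide_eq flip: divide_inverse)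
qed

theorem prob_max_partial_sum_ge_le:
  assumes var: "\<And>i. i < n \<Longrightarrow> expectation (\<lambda>\<omega>. (X i \<omega>)\<^sup>2) \<le> 1"
    and B: "B > 0" and n: "n \<ge> 1" and x: "x \<ge> 0"
  shows "prob {\<omega>\<in>space M. \<exists>k\<le>n. x \<le> (\<Sum>i<k. X i \<omega>)}
    \<le> exp (- x\<^sup>2 / (4 * real n)) + exp (- real n / (4 * B\<^sup>2))"
proof (cases "x * B \<le> real n")
  case True
  define l where "l = x / (2 * real n)"
  have "l \<ge> 0" "l * B \<le> 1/2" using True x n B by (auto simp: l_def field_simps)
  from prob_max_partial_sum_ge_le_exp[OF var this, of x]
  have "prob {\<omega>\<in>space M. \<exists>k\<le>n. x \<le> (\<Sum>i<k. X i \<omega>)} \<le> exp (- x\<^sup>2 / (4 * real n))"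
    using n by (simp add: l_def field_simps power2_eq_square)
  then show ?thesis using exp_ge_zero[of "- real n / (4 * B\<^sup>2)"] by linarith
next
  case False
  define l where "l = 1 / (2 * B)"
  have "l \<ge> 0" "l * B \<le> 1/2" using B by (auto simp: l_def)
  from prob_max_partial_sum_ge_le_exp[OF var this, of x]
  have "prob {\<omega>\<in>space M. \<exists>k\<le>n. x \<le> (\<Sum>i<k. X i \<omega>)} \<le> exp ((real n - 2 * x * B) / (4 * B\<^sup>2))"
    using B by (simp add: l_def field_simps power2_eq_square)
  also have "\<dots> \<le> exp (- real n / (4 * B\<^sup>2))"
    using False B by (intro exp_mono divide_right_mono) auto
  finally show ?thesis using exp_ge_zero[of "- x\<^sup>2 / (4 * real n)"] by linarith
qed

end

lemma integral_PiM_component: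
  fixes h :: "'a \<Rightarrow> real"
  assumes N: "prob_space N" and i: "i \<in> I" and h: "h \<in> borel_measurable N"
  shows "(\<integral>w. h (w i) \<partial>PiM I (\<lambda>_. N)) = (\<integral>x. h x \<partial>N)"
proof -
  have "(\<integral>x. h x \<partial>N) = (\<integral>x. h x \<partial>distr (PiM I (\<lambda>_. N)) N (\<lambda>w. w i))"
    by (subst distr_PiM_component[of I "\<lambda>_. N" i]) (use N i in auto)
  also have "\<dots> = (\<integral>w. h (w i) \<partial>PiM I (\<lambda>_. N))"
    using i h by (intro integral_distr) auto
  finally show ?thesis by simp
qed

lemma measure_PiM_component:
  assumes N: "prob_space N" and i: "i \<in> I" and A: "A \<in> sets N"
  shows "measure (PiM I (\<lambda>_. N)) {w\<in>space (PiM I (\<lambda>_. N)). w i \<in> A} = measure N A"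
proof -
  have "measure (PiM I (\<lambda>_. N)) {w\<in>space (PiM I (\<lambda>_. N)). w i \<in> A}
      = measure (distr (PiM I (\<lambda>_. N)) N (\<lambda>w. w i)) A"
    using i A by (subst measure_distr) (auto simp: vimage_def Int_def conj_commute)
  also have "\<dots> = measure N A"
    by (subst distr_PiM_component[of I "\<lambda>_. N" i]) (use N i in auto)
  finally show ?thesis .
qed

definition truncate :: "real \<Rightarrow> real \<Rightarrow> real" where
  "truncate y x = (if \<bar>x\<bar> \<le> y then x else 0)"

lemma truncate_measurable[measurable]: "truncate y \<in> borel_measurable borel"
  unfolding truncate_def by measurable

lemma abs_truncate_le: "0 \<le> y \<Longrightarrow> \<bar>truncate y x\<bar> \<le> y"
  by (simp add: truncate_def)

lemma abs_truncate_diff_le: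
  assumes "0 < y" "1 \<le> \<alpha>"
  shows "\<bar>truncate y x - x\<bar> \<le> \<bar>x\<bar> powr \<alpha> * y powr (1 - \<alpha>)"
proof (cases "\<bar>x\<bar> \<le> y")
  case False
  then have "\<bar>truncate y x - x\<bar> = \<bar>x\<bar> powr \<alpha> * \<bar>x\<bar> powr (1 - \<alpha>)"
    using assms by (simp add: truncate_def flip: powr_add)
  also have "\<dots> \<le> \<bar>x\<bar> powr \<alpha> * y powr (1 - \<alpha>)"
    using False assms by (intro mult_left_mono powr_mono2') auto
  finally show ?thesis .
qed (simp add: truncate_def)

lemma max_abs_partial_sum_ge_cases:
  fixes w :: "nat \<Rightarrow> real"
  assumes large: "M \<le> (MAX k\<in>{0..n}. \<bar>\<Sum>i<k. w i\<bar>)" and shift: "real n * \<bar>m\<bar> \<le> c"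
  shows "(\<exists>i<n. y < \<bar>w i\<bar>) \<or> (\<exists>k\<le>n. M - c \<le> (\<Sum>i<k. truncate y (w i) - m))
    \<or> (\<exists>k\<le>n. M - c \<le> - (\<Sum>i<k. truncate y (w i) - m))"
proof (cases "\<forall>i<n. \<bar>w i\<bar> \<le> y")
  case True
  from large obtain k where k: "k \<le> n" "M \<le> \<bar>\<Sum>i<k. w i\<bar>" by (auto simp: Max_ge_iff)
  have "(\<Sum>i<k. w i) = (\<Sum>i<k. (truncate y (w i) - m) + m)"
    using True k(1) by (intro sum.cong) (auto simp: truncate_def)
  then have sum_eq: "(\<Sum>i<k. w i) = (\<Sum>i<k. truncate y (w i) - m) + real k * m"
    by (simp add: sum_subtractf)
  have "\<bar>real k * m\<bar> \<le> c"
    using k(1) shift mult_right_mono[of "real k" "real n" "\<bar>m\<bar>"] by (simp add: abs_mult)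
  then have drift: "real k * m \<le> c" "- (real k * m) \<le> c" by (simp_all add: abs_le_iff)
  from k(2) have "M \<le> (\<Sum>i<k. w i) \<or> M \<le> - (\<Sum>i<k. w i)" by (auto simp: abs_if split: if_splits)
  then show ?thesis
  proof
    assume "M \<le> (\<Sum>i<k. w i)"
    then have "M - c \<le> (\<Sum>i<k. truncate y (w i) - m)" using sum_eq drift by linarith
    then show ?thesis using k(1) by blast
  next
    assume "M \<le> - (\<Sum>i<k. w i)"
    then have "M - c \<le> - (\<Sum>i<k. truncate y (w i) - m)" using sum_eq drift by linarith
    then show ?thesis using k(1) by blast
  qed
qed (auto simp: not_le)

lemma exp_neg_le_fact_div_power:
  fixes u :: real
  assumes "0 < u"
  shows "exp (- u) \<le> fact k / u ^ k"
proof -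
  obtain t where "exp u = (\<Sum>m<Suc k. u ^ m / fact m) + exp t / fact (Suc k) * u ^ Suc k"
    using Maclaurin_exp_le[of u "Suc k"] by blast
  moreover have "u ^ k / fact k \<le> (\<Sum>m<Suc k. u ^ m / fact m)"
    by (rule member_le_sum[where f="\<lambda>m. u ^ m / fact m"]) (use assms in auto)
  moreover have "0 \<le> exp t / fact (Suc k) * u ^ Suc k" using assms by simp
  ultimately have "u ^ k / fact k \<le> exp u" by linarith
  then show ?thesis using assms by (simp add: exp_minus field_simps)
qed

lemma exp_neg_powr_le_powr:
  fixes c \<epsilon> q :: real
  assumes c: "0 < c" and \<epsilon>: "0 < \<epsilon>" and q: "0 \<le> q"
  obtains D where "0 \<le> D" "\<And>x. 1 \<le> x \<Longrightarrow> exp (- (x powr \<epsilon>) / c) \<le> D / x powr q"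
proof
  define k where "k = nat \<lceil>q / \<epsilon>\<rceil>"
  have q_le: "q \<le> real k * \<epsilon>"
    using \<epsilon> by (simp add: k_def pos_divide_le_eq[symmetric]) linarith
  show "0 \<le> fact k * c ^ k" using c by simp
  fix x :: real assume x: "1 \<le> x"
  have "exp (- (x powr \<epsilon>) / c) \<le> fact k / (x powr \<epsilon> / c) ^ k"
    using exp_neg_le_fact_div_power[of "x powr \<epsilon> / c" k] x c by simp
  also have "\<dots> = fact k * c ^ k / x powr (real k * \<epsilon>)"
    using x c by (simp add: power_divide powr_realpow[symmetric] powr_powr mult.commute)
  also have "\<dots> \<le> fact k * c ^ k / x powr q"
    using x c q_le by (intro divide_left_mono powr_mono mult_pos_pos) auto
  finally show "exp (- (x powr \<epsilon>) / c) \<le> fact k * c ^ k / x powr q" .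
qed

lemma exp_neg_sq_div_16_le:
  fixes M n :: real
  assumes n: "0 < n" and M: "sqrt n \<le> M"
  shows "exp (- (M\<^sup>2) / (16 * n)) \<le> 36 * (sqrt n / M * exp (- (M\<^sup>2) / (18 * n)))"
proof -
  define t where "t = M / sqrt n"
  have t: "1 \<le> t" using M n by (simp add: t_def)
  have t_sq: "M\<^sup>2 / n = t\<^sup>2" using n by (simp add: t_def power_divide)
  \<comment> \<open>the constant 144 is chosen so that \<open>1/16 - 1/144 = 1/18\<close>\<close>
  have "t \<le> 36 + t\<^sup>2 / 144"
    using sum_squares_ge_zero[of "t - 72" 0] by (simp add: power2_diff field_simps power2_eq_square)
  also have "\<dots> \<le> 36 * (1 + t\<^sup>2 / 144)" by simp
  also have "\<dots> \<le> 36 * exp (t\<^sup>2 / 144)" by (intro mult_left_mono exp_ge_add_one_self) auto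
  finally have "t * exp (- (t\<^sup>2) / 16) \<le> 36 * exp (t\<^sup>2 / 144) * exp (- (t\<^sup>2) / 16)"
    by (intro mult_right_mono) auto
  also have "\<dots> = 36 * exp (- (t\<^sup>2) / 18)" by (simp add: mult.assoc flip: exp_add)
  finally have "exp (- (t\<^sup>2) / 16) \<le> 36 * exp (- (t\<^sup>2) / 18) / t"
    using t by (simp add: field_simps)
  also have "\<dots> = 36 * (sqrt n / M * exp (- (t\<^sup>2) / 18))"
    using n M t by (simp add: t_def field_simps)
  finally show ?thesis using n by (simp add: t_sq[symmetric] field_simps)
qed

lemma truncation_exponent_exists:
  fixes q \<alpha> :: real
  assumes "0 \<le> q" "2 * (1 + q) < \<alpha>"
  shows "\<exists>\<gamma>. 0 < \<gamma> \<and> \<gamma> < 1/2 \<and> 1 + q \<le> \<gamma> * \<alpha>"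
proof (intro exI conjI)
  define \<gamma> where "\<gamma> = (1/2 + (1 + q) / \<alpha>) / 2"
  have "0 < (1 + q) / \<alpha>" "(1 + q) / \<alpha> < 1/2" using assms by (simp_all add: divide_less_eq)
  then show "0 < \<gamma>" "\<gamma> < 1/2" by (simp_all add: \<gamma>_def)
  have "\<gamma> * \<alpha> = \<alpha> / 4 + (1 + q) / 2" using assms by (simp add: \<gamma>_def field_simps)
  then show "1 + q \<le> \<gamma> * \<alpha>" using assms by (simp add: field_simps)
qed

lemma powr_le_if_sqrt_lt_shift:
  fixes n K \<gamma> \<alpha> q :: real
  assumes n: "1 \<le> n" and shift: "sqrt n / 2 < n * K * (n powr \<gamma>) powr (1 - \<alpha>)"
    and \<delta>: "0 < \<gamma> * (\<alpha> - 1) - 1/2" and q: "0 \<le> q"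
  shows "n powr q \<le> (2 * K) powr (q / (\<gamma> * (\<alpha> - 1) - 1/2))"
proof -
  define \<delta> where "\<delta> = \<gamma> * (\<alpha> - 1) - 1/2"
  have "n * (n powr \<gamma>) powr (1 - \<alpha>) = n powr (1 + \<gamma> * (1 - \<alpha>))"
    using n by (simp add: powr_powr powr_add)
  also have "1 + \<gamma> * (1 - \<alpha>) = 1/2 - \<delta>" by (simp add: \<delta>_def algebra_simps)
  also have "n powr (1/2 - \<delta>) = sqrt n / n powr \<delta>" using n by (simp add: powr_diff powr_half_sqrt)
  finally have "sqrt n / 2 < K * sqrt n / n powr \<delta>" using shift by (simp add: mult.assoc mult.commute)
  then have n_\<delta>: "n powr \<delta> < 2 * K" using n by (simp add: field_simps)
  have "n powr q = (n powr \<delta>) powr (q / \<delta>)" using \<delta> by (simp add: \<delta>_def powr_powr)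
  also have "\<dots> \<le> (2 * K) powr (q / \<delta>)" using n_\<delta> \<delta> q by (intro powr_mono2) (auto simp: \<delta>_def)
  finally show ?thesis by (simp add: \<delta>_def)
qed

locale step_distribution = prob_space mu for mu :: "real measure" +
  fixes \<alpha> :: real
  assumes sets_step: "sets mu = sets borel"
    and integrable_step: "integrable mu (\<lambda>x. x)" and step_mean: "(\<integral>x. x \<partial>mu) = 0"
    and integrable_step_square: "integrable mu (\<lambda>x. x\<^sup>2)" and step_variance: "(\<integral>x. x\<^sup>2 \<partial>mu) = 1"
    and alpha_ge_1: "1 \<le> \<alpha>" and integrable_step_moment: "integrable mu (\<lambda>x. \<bar>x\<bar> powr \<alpha>)"
begin

definition abs_moment :: real where
  "abs_moment = (\<integral>x. \<bar>x\<bar> powr \<alpha> \<partial>mu)"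

definition truncated_mean :: "real \<Rightarrow> real" where
  "truncated_mean y = (\<integral>x. truncate y x \<partial>mu)"

lemma space_step: "space mu = UNIV"
  using sets_eq_imp_space_eq[OF sets_step] by simp

declare sets_step[measurable_cong]

lemma abs_moment_nonneg: "0 \<le> abs_moment"
  unfolding abs_moment_def by (intro integral_nonneg_AE) auto

lemma integrable_truncate: "0 \<le> y \<Longrightarrow> integrable mu (truncate y)"
  by (rule integrable_const_bound[where B=y]) (auto simp: abs_truncate_le)

lemma integrable_truncate_square: "0 \<le> y \<Longrightarrow> integrable mu (\<lambda>x. (truncate y x)\<^sup>2)"
  by (rule integrable_const_bound[where B="y\<^sup>2"])
    (auto simp: abs_truncate_le power_mono simp flip: abs_le_square_iff)

lemma measure_abs_gt_le:
  assumes "0 < y"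
  shows "measure mu {x. y < \<bar>x\<bar>} \<le> abs_moment / y powr \<alpha>"
proof -
  have "{x. y < \<bar>x\<bar>} \<subseteq> {x\<in>space mu. y powr \<alpha> \<le> \<bar>x\<bar> powr \<alpha>}"
    using assms alpha_ge_1 by (auto simp: space_step intro: powr_mono2)
  then have "measure mu {x. y < \<bar>x\<bar>} \<le> measure mu {x\<in>space mu. y powr \<alpha> \<le> \<bar>x\<bar> powr \<alpha>}"
    by (intro finite_measure_mono) measurable
  also have "\<dots> \<le> abs_moment / y powr \<alpha>"
    unfolding abs_moment_def using assms
    by (intro integral_Markov_inequality_measure[OF integrable_step_moment]) auto
  finally show ?thesis .
qed

lemma abs_truncated_mean_le:
  assumes "0 < y"
  shows "\<bar>truncated_mean y\<bar> \<le> abs_moment * y powr (1 - \<alpha>)"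
proof -
  have "truncated_mean y = (\<integral>x. truncate y x - x \<partial>mu)"
    using integrable_truncate assms integrable_step step_mean by (simp add: truncated_mean_def)
  also have "\<bar>\<dots>\<bar> \<le> (\<integral>x. \<bar>x\<bar> powr \<alpha> * y powr (1 - \<alpha>) \<partial>mu)"
    using integrable_truncate assms integrable_step integrable_step_moment alpha_ge_1
    by (intro order_trans[OF integral_abs_bound] integral_mono abs_truncate_diff_le) auto
  also have "\<dots> = abs_moment * y powr (1 - \<alpha>)" by (simp add: abs_moment_def)
  finally show ?thesis .
qed

lemma integral_truncate_centred: "0 \<le> y \<Longrightarrow> (\<integral>x. truncate y x - truncated_mean y \<partial>mu) = 0"
  using integrable_truncate by (simp add: truncated_mean_def prob_space)

lemma integral_truncate_centred_square_le:
  assumes "0 \<le> y"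
  shows "(\<integral>x. (truncate y x - truncated_mean y)\<^sup>2 \<partial>mu) \<le> 1"
proof -
  let ?m = "truncated_mean y"
  have "(\<integral>x. (truncate y x - ?m)\<^sup>2 \<partial>mu) = (\<integral>x. (truncate y x)\<^sup>2 - 2 * ?m * truncate y x + ?m\<^sup>2 \<partial>mu)"
    by (simp add: power2_diff algebra_simps)
  also have "\<dots> = (\<integral>x. (truncate y x)\<^sup>2 \<partial>mu) - ?m\<^sup>2"
    using integrable_truncate[OF assms] integrable_truncate_square[OF assms]
    by (simp add: truncated_mean_def prob_space power2_eq_square)
  also have "\<dots> \<le> (\<integral>x. (truncate y x)\<^sup>2 \<partial>mu)" by simp
  also have "\<dots> \<le> (\<integral>x. x\<^sup>2 \<partial>mu)"
    using integrable_truncate_square[OF assms] integrable_step_square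
    by (intro integral_mono) (auto simp: truncate_def)
  finally show ?thesis using step_variance by simp
qed

lemma abs_truncate_centred_le:
  assumes "1 \<le> y"
  shows "\<bar>truncate y x - truncated_mean y\<bar> \<le> (1 + abs_moment) * y"
proof -
  have "y powr (1 - \<alpha>) \<le> y" using powr_mono[of "1 - \<alpha>" 0 y] assms alpha_ge_1 by simp
  then have "\<bar>truncated_mean y\<bar> \<le> abs_moment * y"
    using abs_truncated_mean_le[of y] assms mult_left_mono[OF _ abs_moment_nonneg] by force
  moreover have "\<bar>truncate y x\<bar> \<le> y" using assms by (simp add: abs_truncate_le)
  ultimately show ?thesis by (simp add: algebra_simps)
qed

lemma truncated_steps_bounded_centred:
  assumes n: "1 \<le> n" and y: "1 \<le> y"
  shows "bounded_centred_increments (PiM {..<n} (\<lambda>_. mu))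
    (\<lambda>i w. if i < n then truncate y (w i) - truncated_mean y else 0) n ((1 + abs_moment) * y)"
proof -
  interpret P: prob_space "PiM {..<n} (\<lambda>_. mu)" by (rule prob_space_PiM) (rule prob_space_axioms)
  let ?f = "\<lambda>x. truncate y x - truncated_mean y"
  have "P.indep_vars (\<lambda>_. borel) (\<lambda>i w. ?f (w i)) {..<n}"
    using n by (intro indep_vars_PiM_components prob_space_axioms) (auto simp: lessThan_empty_iff)
  moreover have "P.indep_vars (\<lambda>_. borel) (\<lambda>i w. if i < n then ?f (w i) else 0) {..<n}
      \<longleftrightarrow> P.indep_vars (\<lambda>_. borel) (\<lambda>i w. ?f (w i)) {..<n}"
    by (rule P.indep_vars_cong) auto
  moreover have "(\<lambda>w. if i < n then ?f (w i) else 0) \<in> borel_measurable (PiM {..<n} (\<lambda>_. mu))" for i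
    by (cases "i < n") auto
  moreover have "P.expectation (\<lambda>w. ?f (w i)) = 0" if "i < n" for i
    using integral_PiM_component[OF prob_space_axioms, of i "{..<n}" ?f] integral_truncate_centred[of y] that y
    by simp
  ultimately show ?thesis
    using y by unfold_locales (auto simp: abs_truncate_centred_le)
qed

lemma expectation_truncated_step_square_le:
  assumes "i < n" "0 \<le> y"
  shows "(\<integral>w. (truncate y (w i) - truncated_mean y)\<^sup>2 \<partial>PiM {..<n} (\<lambda>_. mu)) \<le> 1"
  using integral_PiM_component[OF prob_space_axioms, of i "{..<n}" "\<lambda>x. (truncate y x - truncated_mean y)\<^sup>2"]
    integral_truncate_centred_square_le[of y] assms
  by simp

lemma measure_exists_large_step_le:
  assumes "0 < y"
  shows "measure (PiM {..<n} (\<lambda>_. mu)) (\<Union>i<n. {w\<in>space (PiM {..<n} (\<lambda>_. mu)). w i \<in> {x. y < \<bar>x\<bar>}})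
    \<le> real n * abs_moment / y powr \<alpha>"
proof -
  have "measure (PiM {..<n} (\<lambda>_. mu)) (\<Union>i<n. {w\<in>space (PiM {..<n} (\<lambda>_. mu)). w i \<in> {x. y < \<bar>x\<bar>}})
      \<le> (\<Sum>i<n. measure (PiM {..<n} (\<lambda>_. mu)) {w\<in>space (PiM {..<n} (\<lambda>_. mu)). w i \<in> {x. y < \<bar>x\<bar>}})"
    by (intro measure_UNION_le) measurable
  also have "\<dots> = (\<Sum>i<n. measure mu {x. y < \<bar>x\<bar>})"
    by (intro sum.cong refl measure_PiM_component prob_space_axioms) auto
  also have "\<dots> = real n * measure mu {x. y < \<bar>x\<bar>}" by simp
  also have "\<dots> \<le> real n * (abs_moment / y powr \<alpha>)"
    by (intro mult_left_mono measure_abs_gt_le assms) auto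
  finally show ?thesis by simp
qed

theorem rw_max_tail_le_truncated:
  assumes n: "1 \<le> n" and y: "1 \<le> y" and M: "real n * abs_moment * y powr (1 - \<alpha>) \<le> M"
  shows "rw_max_tail mu n M \<le> real n * abs_moment / y powr \<alpha>
    + 2 * (exp (- (M - real n * abs_moment * y powr (1 - \<alpha>))\<^sup>2 / (4 * real n))
         + exp (- real n / (4 * ((1 + abs_moment) * y)\<^sup>2)))"
proof -
  define P where "P = PiM {..<n} (\<lambda>_. mu)"
  define X where "X i w = (if i < n then truncate y (w i) - truncated_mean y else 0)" for i w
  define c where "c = real n * abs_moment * y powr (1 - \<alpha>)"
  define B where "B = (1 + abs_moment) * y"
  interpret X: bounded_centred_increments P X n B
    unfolding P_def X_def[abs_def] B_def by (rule truncated_steps_bounded_centred[OF n y])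
  interpret neg_X: bounded_centred_increments P "\<lambda>i w. - X i w" n B
    by (rule X.bounded_centred_increments_uminus)
  have var: "X.expectation (\<lambda>w. (X i w)\<^sup>2) \<le> 1" if "i < n" for i
    using expectation_truncated_step_square_le[OF that, of y] that y by (simp add: P_def X_def)
  have "B > 0" using y abs_moment_nonneg by (simp add: B_def)
  define large_step where "large_step = (\<Union>i<n. {w\<in>space P. w i \<in> {x. y < \<bar>x\<bar>}})"
  define up where "up = {w\<in>space P. \<exists>k\<le>n. M - c \<le> (\<Sum>i<k. X i w)}"
  define down where "down = {w\<in>space P. \<exists>k\<le>n. M - c \<le> (\<Sum>i<k. - X i w)}"
  have [measurable]: "large_step \<in> sets P" unfolding large_step_def P_def by measurable
  have [measurable]: "up \<in> sets P" "down \<in> sets P" unfolding up_def down_def by measurable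
  have drift: "real n * \<bar>truncated_mean y\<bar> \<le> c"
    unfolding c_def using y abs_truncated_mean_le[of y] by (simp add: mult.assoc mult_left_mono)
  have sums: "(\<Sum>i<k. X i w) = (\<Sum>i<k. truncate y (w i) - truncated_mean y)" if "k \<le> n" for k w
    using that by (intro sum.cong) (auto simp: X_def)
  have "{w\<in>space P. M \<le> (MAX k\<in>{0..n}. \<bar>\<Sum>i<k. w i\<bar>)} \<subseteq> large_step \<union> up \<union> down"
  proof
    fix w assume w: "w \<in> {w\<in>space P. M \<le> (MAX k\<in>{0..n}. \<bar>\<Sum>i<k. w i\<bar>)}"
    then consider "\<exists>i<n. y < \<bar>w i\<bar>"
      | k where "k \<le> n" "M - c \<le> (\<Sum>i<k. truncate y (w i) - truncated_mean y)"
      | k where "k \<le> n" "M - c \<le> - (\<Sum>i<k. truncate y (w i) - truncated_mean y)"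
      using max_abs_partial_sum_ge_cases[OF _ drift, of M w y] by auto
    then show "w \<in> large_step \<union> up \<union> down"
    proof cases
      case 1
      then show ?thesis using w by (auto simp: large_step_def)
    next
      case (2 k)
      then show ?thesis using w sums[OF 2(1)] by (auto simp: up_def)
    next
      case (3 k)
      then show ?thesis using w sums[OF 3(1)] by (auto simp: down_def sum_negf)
    qed
  qed
  then have "rw_max_tail mu n M \<le> measure P (large_step \<union> up \<union> down)"
    unfolding rw_max_tail_def P_def[symmetric] by (intro X.finite_measure_mono) auto
  also have "\<dots> \<le> measure P large_step + measure P up + measure P down"
    by (intro order_trans[OF measure_Un_le] add_right_mono measure_Un_le) auto
  also have "\<dots> \<le> real n * abs_moment / y powr \<alpha>
      + (exp (- (M - c)\<^sup>2 / (4 * real n)) + exp (- real n / (4 * B\<^sup>2)))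
      + (exp (- (M - c)\<^sup>2 / (4 * real n)) + exp (- real n / (4 * B\<^sup>2)))"
    using measure_exists_large_step_le[of y n] y var M \<open>B > 0\<close> n
      X.prob_max_partial_sum_ge_le[of "M - c"] neg_X.prob_max_partial_sum_ge_le[of "M - c"]
    unfolding large_step_def up_def down_def P_def c_def
    by (intro add_mono) auto
  finally show ?thesis by (simp add: c_def B_def)
qed

lemma rw_max_tail_le_powr_truncation:
  assumes n: "1 \<le> n" and \<gamma>: "0 < \<gamma>" and M: "sqrt (real n) \<le> M"
    and shift: "real n * abs_moment * (real n powr \<gamma>) powr (1 - \<alpha>) \<le> M / 2"
  shows "rw_max_tail mu n M \<le> abs_moment / real n powr (\<gamma> * \<alpha> - 1)
    + 72 * (sqrt (real n) / M * exp (- (M\<^sup>2) / (18 * real n)))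
    + 2 * exp (- (real n powr (1 - 2 * \<gamma>)) / (4 * (1 + abs_moment)\<^sup>2))"
proof -
  define y where "y = real n powr \<gamma>"
  define c where "c = real n * abs_moment * y powr (1 - \<alpha>)"
  let ?gauss = "sqrt (real n) / M * exp (- (M\<^sup>2) / (18 * real n))"
  have y: "1 \<le> y" using n \<gamma> by (simp add: y_def ge_one_powr_ge_zero)
  have "1 \<le> sqrt (real n)" using n by simp
  with M have "0 < M" by linarith
  then have c: "c \<le> M" "M / 2 \<le> M - c" using shift by (auto simp: c_def y_def)
  have gauss: "exp (- (M - c)\<^sup>2 / (4 * real n)) \<le> 36 * ?gauss"
  proof -
    have "(M / 2)\<^sup>2 \<le> (M - c)\<^sup>2" using c \<open>0 < M\<close> by (intro power_mono) auto
    then have "exp (- (M - c)\<^sup>2 / (4 * real n)) \<le> exp (- (M\<^sup>2) / (16 * real n))"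
      using n by (simp add: field_simps power_divide)
    also have "\<dots> \<le> 36 * ?gauss"
      using n M by (intro exp_neg_sq_div_16_le) auto
    finally show ?thesis .
  qed
  have "rw_max_tail mu n M \<le> real n * abs_moment / y powr \<alpha>
      + 2 * (exp (- (M - c)\<^sup>2 / (4 * real n)) + exp (- real n / (4 * ((1 + abs_moment) * y)\<^sup>2)))"
    using rw_max_tail_le_truncated[OF n y] c by (simp add: c_def)
  also have "real n * abs_moment / y powr \<alpha> = abs_moment / real n powr (\<gamma> * \<alpha> - 1)"
    using n by (simp add: y_def powr_powr powr_diff)
  also have "exp (- real n / (4 * ((1 + abs_moment) * y)\<^sup>2))
      = exp (- (real n powr (1 - 2 * \<gamma>)) / (4 * (1 + abs_moment)\<^sup>2))"
  proof -
    have "real n / y\<^sup>2 = real n powr (1 - 2 * \<gamma>)"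
      using n by (simp add: y_def powr_powr powr_diff mult.commute flip: powr_realpow)
    moreover have "real n / (4 * ((1 + abs_moment) * y)\<^sup>2) = real n / y\<^sup>2 / (4 * (1 + abs_moment)\<^sup>2)"
      by (simp add: power_mult_distrib mult_ac)
    ultimately show ?thesis by (metis minus_divide_left)
  qed
  also have "abs_moment / real n powr (\<gamma> * \<alpha> - 1) + 2 * (exp (- (M - c)\<^sup>2 / (4 * real n))
      + exp (- (real n powr (1 - 2 * \<gamma>)) / (4 * (1 + abs_moment)\<^sup>2)))
    \<le> abs_moment / real n powr (\<gamma> * \<alpha> - 1) + 2 * (36 * ?gauss
      + exp (- (real n powr (1 - 2 * \<gamma>)) / (4 * (1 + abs_moment)\<^sup>2)))"
    using gauss by simp
  finally show ?thesis by (simp add: algebra_simps)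
qed

lemma rw_max_tail_le_powr_at:
  assumes \<gamma>: "0 < \<gamma>" "\<gamma> < 1/2" and q: "0 \<le> q" "1 + q \<le> \<gamma> * \<alpha>"
    and D: "0 \<le> D" "exp (- (real n powr (1 - 2 * \<gamma>)) / (4 * (1 + abs_moment)\<^sup>2)) \<le> D / real n powr q"
    and n: "1 \<le> n" and M: "sqrt (real n) \<le> M"
  shows "rw_max_tail mu n M \<le> (abs_moment + 72 + 2 * D + (2 * abs_moment) powr (q / (\<gamma> * (\<alpha> - 1) - 1/2)))
    * (sqrt (real n) / M * exp (- (M ^ 2) / (18 * real n)) + 1 / real n powr q)"
proof -
  define N where "N = (2 * abs_moment) powr (q / (\<gamma> * (\<alpha> - 1) - 1/2))"
  define gauss where "gauss = sqrt (real n) / M * exp (- (M ^ 2) / (18 * real n))"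
  define b where "b = 1 / real n powr q"
  have "1 \<le> sqrt (real n)" using n by simp
  with M have "0 < M" by linarith
  then have "0 \<le> gauss" "0 < b" using n by (simp_all add: gauss_def b_def)
  have "rw_max_tail mu n M \<le> abs_moment * b + 72 * gauss + 2 * (D * b) \<or> rw_max_tail mu n M \<le> N * b"
  proof (cases "real n * abs_moment * (real n powr \<gamma>) powr (1 - \<alpha>) \<le> M / 2")
    case True
    have "abs_moment / real n powr (\<gamma> * \<alpha> - 1) \<le> abs_moment / real n powr q"
      using n q by (intro divide_left_mono powr_mono abs_moment_nonneg) auto
    then have "abs_moment / real n powr (\<gamma> * \<alpha> - 1) \<le> abs_moment * b" by (simp add: b_def)
    moreover have "exp (- (real n powr (1 - 2 * \<gamma>)) / (4 * (1 + abs_moment)\<^sup>2)) \<le> D * b"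
      using D(2) by (simp add: b_def)
    moreover note rw_max_tail_le_powr_truncation[OF n \<gamma>(1) M True, folded gauss_def]
    ultimately show ?thesis by linarith
  next
    case False
    have "0 < \<gamma> * (\<alpha> - 1) - 1/2" using \<gamma> q by (simp add: right_diff_distrib)
    with False have "real n powr q \<le> N"
      unfolding N_def using M n q by (intro powr_le_if_sqrt_lt_shift) auto
    then have "1 \<le> N * b" using n by (simp add: b_def)
    moreover have "rw_max_tail mu n M \<le> 1"
      unfolding rw_max_tail_def by (rule prob_space.prob_le_1, rule prob_space_PiM) (rule prob_space_axioms)
    ultimately show ?thesis by simp
  qed
  moreover have "0 \<le> abs_moment * gauss" "0 \<le> D * gauss" "0 \<le> N * gauss" "0 \<le> N * b"
    "0 \<le> abs_moment * b" "0 \<le> D * b"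
    using \<open>0 \<le> gauss\<close> \<open>0 < b\<close> D(1) abs_moment_nonneg by (simp_all add: N_def)
  ultimately show ?thesis
    using \<open>0 \<le> gauss\<close> \<open>0 < b\<close> unfolding N_def[symmetric] gauss_def[symmetric] b_def[symmetric]
      distrib_left distrib_right mult.assoc
    by (elim disjE) linarith+
qed

theorem rw_max_tail_le_powr:
  assumes \<gamma>: "0 < \<gamma>" "\<gamma> < 1/2" and q: "0 \<le> q" "1 + q \<le> \<gamma> * \<alpha>" and p: "p \<le> q"
  shows "\<exists>C>0. \<forall>n::nat. \<forall>M::real. n \<ge> 1 \<longrightarrow> M \<ge> sqrt (real n) \<longrightarrow>
    rw_max_tail mu n M \<le> C * (sqrt (real n) / M * exp (- (M ^ 2) / (18 * real n)) + 1 / (real n powr p))"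
proof -
  obtain D where D: "0 \<le> D"
    "\<And>x. 1 \<le> x \<Longrightarrow> exp (- (x powr (1 - 2 * \<gamma>)) / (4 * (1 + abs_moment)\<^sup>2)) \<le> D / x powr q"
  proof (rule exp_neg_powr_le_powr[of "4 * (1 + abs_moment)\<^sup>2" "1 - 2 * \<gamma>" q])
    show "0 < 4 * (1 + abs_moment)\<^sup>2" using abs_moment_nonneg by (simp add: add_pos_nonneg)
  qed (use \<gamma> q in auto)
  define C where "C = abs_moment + 72 + 2 * D + (2 * abs_moment) powr (q / (\<gamma> * (\<alpha> - 1) - 1/2))"
  show ?thesis
  proof (intro exI[of _ C] conjI allI impI)
    have "0 \<le> (2 * abs_moment) powr (q / (\<gamma> * (\<alpha> - 1) - 1/2))" by simp
    then show "0 < C" using abs_moment_nonneg D(1) unfolding C_def by linarith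
    fix n :: nat and M :: real assume n: "n \<ge> 1" and M: "M \<ge> sqrt (real n)"
    have "1 \<le> real n" using n by simp
    from rw_max_tail_le_powr_at[OF \<gamma> q D(1) D(2)[OF this] n M, folded C_def]
    have "rw_max_tail mu n M \<le> C * (sqrt (real n) / M * exp (- (M ^ 2) / (18 * real n)) + 1 / real n powr q)" .
    also have "\<dots> \<le> C * (sqrt (real n) / M * exp (- (M ^ 2) / (18 * real n)) + 1 / (real n powr p))"
      using n p \<open>0 < C\<close> by (intro mult_left_mono add_left_mono divide_left_mono powr_mono) auto
    finally show "rw_max_tail mu n M
        \<le> C * (sqrt (real n) / M * exp (- (M ^ 2) / (18 * real n)) + 1 / (real n powr p))" .
  qed
qed

end

theorem mainTheorem8:
  fixes mu :: "real measure" and \<alpha> :: real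
  assumes "prob_space mu"
    and "sets mu = sets borel"
    and "integrable mu (\<lambda>x. x)" and "(\<integral>x. x \<partial>mu) = 0"
    and "integrable mu (\<lambda>x. x ^ 2)" and "(\<integral>x. x ^ 2 \<partial>mu) = 1"
    and "\<alpha> > 3" and "integrable mu (\<lambda>x. \<bar>x\<bar> powr \<alpha>)"
  shows "\<forall>p::real. p < 1/2 \<longrightarrow> (\<exists>C>0. \<forall>n::nat. \<forall>M::real. n \<ge> 1 \<longrightarrow> M \<ge> sqrt (real n) \<longrightarrow>
           rw_max_tail mu n M
             \<le> C * (sqrt (real n) / M * exp (- (M ^ 2) / (18 * real n)) + 1 / (real n powr p)))"
proof (intro allI impI)
  fix p :: real assume p: "p < 1/2"
  have "step_distribution mu \<alpha>"
    using assms by (intro step_distribution.intro step_distribution_axioms.intro) simp_all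
  then interpret step_distribution mu \<alpha> .
  define q where "q = max p 0"
  have q: "0 \<le> q" "2 * (1 + q) < \<alpha>" using p \<open>\<alpha> > 3\<close> by (auto simp: q_def)
  then obtain \<gamma> where \<gamma>: "0 < \<gamma>" "\<gamma> < 1/2" "1 + q \<le> \<gamma> * \<alpha>"
    using truncation_exponent_exists by blast
  show "\<exists>C>0. \<forall>n::nat. \<forall>M::real. n \<ge> 1 \<longrightarrow> M \<ge> sqrt (real n) \<longrightarrow>
      rw_max_tail mu n M \<le> C * (sqrt (real n) / M * exp (- (M ^ 2) / (18 * real n)) + 1 / (real n powr p))"
    by (rule rw_max_tail_le_powr[OF \<gamma>(1,2) q(1) \<gamma>(3)]) (simp add: q_def)
qed

end
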